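(* There exists a non-commutative bilinear algorithm that multiplies two $9\times 9$ matrices using $\langle 6,6,6\rangle+3\,\langle 6,6,3\rangle+3\,\langle 6,3,3\rangle$ multiplications. In particular, $$\langle 9,9,9\rangle\leq\langle 6,6,6\rangle+3\,\langle 6,6,3\rangle+3\,\langle 6,3,3\rangle .$$
   Context: Fix a field $\mathbb{K}$. A non-commutative bilinear algorithm for multiplying an $a\times b$ matrix $A$ by a $b\times c$ matrix $B$ using $r$ multiplications consists of $r$ products $t_k=\big(\sum_{i,j}\alpha^{(k)}_{ij}a_{ij}\big)\big(\sum_{j,l}\beta^{(k)}_{jl}b_{jl}\big)$ with scalars in $\mathbb{K}$, together with scalars $\gamma^{(k)}_{il}\in\mathbb{K}$ such that $(AB)_{il}=\sum_k\gamma^{(k)}_{il}t_k$ for all $i,l$. This identity must hold when the entries lie in an arbitrary, not necessarily commutative, associative $\mathbb{K}$-algebra. The quantity $\langle a,b,c\rangle$ denotes the minimal such $r$, i.e. the tensor rank of the matrix multiplication tensor of format $(a,b,c)$. *)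

theory Defs
  imports Main
begin

text \<open>A non-commutative bilinear algorithm for multiplying an a x b matrix by a b x c matrix
  with r multiplications, over the field 'k.  Indices are 0-based.
  alpha k i j : coefficient of A(i,j) in the left factor of product k;
  beta k j l  : coefficient of B(j,l) in the right factor of product k;
  gamma k i l : coefficient of product k in the output entry (AB)(i,l).
  The identity holds over every (possibly non-commutative) associative algebra iff the
  coefficient of each monomial A(i,j) B(j',l) in the output entry (i',l') is correct,
  i.e. iff the following tensor identity holds.\<close>
definition mm_alg ::
  "nat \<Rightarrow> nat \<Rightarrow> nat \<Rightarrow> nat \<Rightarrow> (nat \<Rightarrow> nat \<Rightarrow> nat \<Rightarrow> 'k::field)
     \<Rightarrow> (nat \<Rightarrow> nat \<Rightarrow> nat \<Rightarrow> 'k) \<Rightarrow> (nat \<Rightarrow> nat \<Rightarrow> nat \<Rightarrow> 'k) \<Rightarrow> bool" where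
  "mm_alg a b c r alpha beta gamma \<longleftrightarrow>
     (\<forall>i<a. \<forall>j<b. \<forall>j'<b. \<forall>l<c. \<forall>i'<a. \<forall>l'<c.
        (\<Sum>k<r. alpha k i j * beta k j' l * gamma k i' l') =
        (if i = i' \<and> j = j' \<and> l = l' then 1 else 0))"

definition mm_rank :: "'k::field itself \<Rightarrow> nat \<Rightarrow> nat \<Rightarrow> nat \<Rightarrow> nat" where
  "mm_rank _ a b c =
     (LEAST r. \<exists>(alpha :: nat \<Rightarrow> nat \<Rightarrow> nat \<Rightarrow> 'k) beta gamma. mm_alg a b c r alpha beta gamma)"

end

theory Submission
  imports Defs
begin

(* Split 9 = 6 + 3 and view a 9 x 9 matrix as a 2 x 2 block matrix whose blocks are zero-padded
   to 6 x 6, then apply Strassen's seven products blockwise. Along each of its three dimensions a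
   product only needs the smaller of the two blocks meeting there, since the padding of the other
   one vanishes; this shrinks the products to one of format <6,6,6>, three of formats <6,6,3>,
   <6,3,6>, <3,6,6> and three of formats <6,3,3>, <3,3,6>, <3,6,3>. Cyclically rotating a bilinear
   algorithm gives one of the rotated format, so rotated formats have equal rank. *)

lemma sum_lessThan_add:
  fixes m n :: nat
  shows "(\<Sum>p<m + n. f p) = (\<Sum>p<m. f p) + (\<Sum>p<n. f (m + p))"
  by (induction n) (simp_all add: add.assoc)

lemma mm_alg_rotate:
  assumes "mm_alg a b c r alpha beta gamma"
  shows "mm_alg b c a r beta (\<lambda>k l i. gamma k i l) (\<lambda>k j i. alpha k i j)"
  unfolding mm_alg_def
proof (intro allI impI)
  fix j l l' i j' i'
  assume "j < b" "l < c" "l' < c" "i < a" "j' < b" "i' < a"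
  then have "(\<Sum>k<r. alpha k i' j' * beta k j l * gamma k i l') =
      (if i' = i \<and> j' = j \<and> l = l' then 1 else 0)"
    using assms unfolding mm_alg_def by blast
  then show "(\<Sum>k<r. beta k j l * gamma k i l' * alpha k i' j') =
      (if j = j' \<and> l = l' \<and> i = i' then 1 else 0)"
    by (auto simp: mult_ac)
qed

lemma div_mod_decode_iff:
  fixes k i j l b c :: nat
  assumes "j < b" "l < c"
  shows "k div (b * c) = i \<and> k div c mod b = j \<and> k mod c = l \<longleftrightarrow> k = (i * b + j) * c + l"
proof -
  have "k div (b * c) = k div c div b"
    by (metis div_mult2_eq mult.commute)
  moreover have "k = (k div c div b * b + k div c mod b) * c + k mod c"
    by simp
  ultimately show ?thesis
    using assms by auto
qed

lemma mixed_radix_less: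
  fixes i j l a b c :: nat
  assumes "i < a" "j < b" "l < c"
  shows "(i * b + j) * c + l < a * b * c"
proof -
  have "i * b + j < a * b"
    using assms mult_le_mono1[of "Suc i" a b] by simp
  then have "(i * b + j) * c + l < (i * b + j) * c + c"
    using assms by simp
  also have "\<dots> \<le> a * b * c"
    using \<open>i * b + j < a * b\<close> mult_le_mono1[of "Suc (i * b + j)" "a * b" c] by simp
  finally show ?thesis .
qed

(* Product k = (i * b + j) * c + l computes A(i,j) B(j,l). *)
lemma mm_alg_naive:
  "mm_alg a b c (a * b * c)
    (\<lambda>k i j. of_bool (k div (b * c) = i \<and> k div c mod b = j))
    (\<lambda>k j l. of_bool (k div c mod b = j \<and> k mod c = l))
    (\<lambda>k i l. of_bool (k div (b * c) = i \<and> k mod c = l) :: 'k::field)"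
  unfolding mm_alg_def
proof (intro allI impI)
  fix i j j' l i' l'
  assume idx: "i < a" "j < b" "j' < b" "l < c" "i' < a" "l' < c"
  have product_eq: "of_bool (k div (b * c) = i \<and> k div c mod b = j) *
      of_bool (k div c mod b = j' \<and> k mod c = l) *
      of_bool (k div (b * c) = i' \<and> k mod c = l') =
      of_bool (i = i' \<and> j = j' \<and> l = l') * (of_bool (k = (i * b + j) * c + l) :: 'k)" for k
    using div_mod_decode_iff[OF idx(2,4), of k i] by auto
  have "(i * b + j) * c + l < a * b * c"
    using idx(1,2,4) by (rule mixed_radix_less)
  then show "(\<Sum>k<a * b * c. of_bool (k div (b * c) = i \<and> k div c mod b = j) *
      of_bool (k div c mod b = j' \<and> k mod c = l) *
      of_bool (k div (b * c) = i' \<and> k mod c = l')) =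
      (if i = i' \<and> j = j' \<and> l = l' then 1 else (0::'k))"
    unfolding product_eq sum_distrib_left[symmetric] by simp
qed

lemma ex_mm_alg_mm_rank:
  "\<exists>(alpha :: nat \<Rightarrow> nat \<Rightarrow> nat \<Rightarrow> 'k::field) beta gamma.
     mm_alg a b c (mm_rank TYPE('k) a b c) alpha beta gamma"
  unfolding mm_rank_def by (rule LeastI_ex) (use mm_alg_naive in blast)

lemma mm_rank_le:
  assumes "mm_alg a b c r (alpha :: nat \<Rightarrow> nat \<Rightarrow> nat \<Rightarrow> 'k::field) beta gamma"
  shows "mm_rank TYPE('k) a b c \<le> r"
  unfolding mm_rank_def by (rule Least_le) (use assms in blast)

lemma mm_rank_rotate: "mm_rank TYPE('k::field) b c a = mm_rank TYPE('k) a b c"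
proof -
  have le: "mm_rank TYPE('k) b c a \<le> mm_rank TYPE('k) a b c" for a b c
  proof -
    obtain alpha beta gamma :: "nat \<Rightarrow> nat \<Rightarrow> nat \<Rightarrow> 'k"
      where "mm_alg a b c (mm_rank TYPE('k) a b c) alpha beta gamma"
      using ex_mm_alg_mm_rank by blast
    then show ?thesis
      by (rule mm_rank_le[OF mm_alg_rotate])
  qed
  show ?thesis
    using le[of a b c] le[of b c a] le[of c a b] by linarith
qed

(* Concatenation of the families f k of length r k, for k < n; the value for n = 0 is irrelevant,
   as it is only used on an empty range. *)
primrec stack :: "(nat \<Rightarrow> nat) \<Rightarrow> (nat \<Rightarrow> nat \<Rightarrow> 'a) \<Rightarrow> nat \<Rightarrow> nat \<Rightarrow> 'a" where
  "stack r f 0 = f 0"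
| "stack r f (Suc n) =
     (\<lambda>p. if p < (\<Sum>k<n. r k) then stack r f n p else f n (p - (\<Sum>k<n. r k)))"

lemma sum_stack:
  "(\<Sum>p<(\<Sum>k<n. r k). F (stack r f n p) (stack r g n p) (stack r h n p)) =
   (\<Sum>k<n. \<Sum>p<r k. F (f k p) (g k p) (h k p))"
  by (induction n) (simp_all add: sum_lessThan_add)

definition block_index :: "nat \<Rightarrow> nat \<Rightarrow> nat" where
  "block_index s x = (if x < s then 0 else 1)"

definition block_offset :: "nat \<Rightarrow> nat \<Rightarrow> nat" where
  "block_offset s x = (if x < s then x else x - s)"

definition block_size :: "nat \<Rightarrow> nat \<Rightarrow> nat \<Rightarrow> nat" where
  "block_size s t i = (if i = 0 then s else t)"

lemma block_index_less: "block_index s x < 2"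
  by (simp add: block_index_def)

lemma block_offset_less: "x < s + t \<Longrightarrow> block_offset s x < block_size s t (block_index s x)"
  by (auto simp: block_offset_def block_index_def block_size_def)

lemma block_eq_iff:
  "x = x' \<longleftrightarrow> block_index s x = block_index s x' \<and> block_offset s x = block_offset s x'"
  by (auto simp: block_index_def block_offset_def split: if_splits)

(* The products are computed on P x Q and Q x T corners of the padded blocks only. Along each
   dimension this loses nothing if the corner covers the smaller of the two blocks meeting there. *)
definition block_fits ::
  "nat \<Rightarrow> nat \<Rightarrow> nat \<Rightarrow> nat \<Rightarrow> nat \<Rightarrow> (nat \<Rightarrow> nat \<Rightarrow> 'k::zero)
    \<Rightarrow> (nat \<Rightarrow> nat \<Rightarrow> 'k) \<Rightarrow> (nat \<Rightarrow> nat \<Rightarrow> 'k) \<Rightarrow> bool" where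
  "block_fits s t P Q T u v w \<longleftrightarrow>
     (\<forall>i<2. \<forall>j<2. \<forall>i'<2. \<forall>l'<2. u i j \<noteq> 0 \<and> w i' l' \<noteq> 0 \<longrightarrow>
        min (block_size s t i) (block_size s t i') \<le> P) \<and>
     (\<forall>i<2. \<forall>j<2. \<forall>j'<2. \<forall>l<2. u i j \<noteq> 0 \<and> v j' l \<noteq> 0 \<longrightarrow>
        min (block_size s t j) (block_size s t j') \<le> Q) \<and>
     (\<forall>j'<2. \<forall>l<2. \<forall>i'<2. \<forall>l'<2. v j' l \<noteq> 0 \<and> w i' l' \<noteq> 0 \<longrightarrow>
        min (block_size s t l) (block_size s t l') \<le> T)"

lemma block_fitsD:
  assumes "block_fits s t P Q T u v w"
    and "i < 2" "j < 2" "j' < 2" "l < 2" "i' < 2" "l' < 2"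
    and "u i j \<noteq> 0" "v j' l \<noteq> 0" "w i' l' \<noteq> 0"
  shows "min (block_size s t i) (block_size s t i') \<le> P \<and>
    min (block_size s t j) (block_size s t j') \<le> Q \<and> min (block_size s t l) (block_size s t l') \<le> T"
  using assms unfolding block_fits_def by simp

lemma block_fits_offsets:
  fixes u v w :: "nat \<Rightarrow> nat \<Rightarrow> 'k::mult_zero"
  assumes "block_fits s t P Q T u v w"
    and "u (block_index s x) (block_index s y) * v (block_index s y') (block_index s z) *
      w (block_index s x') (block_index s z') \<noteq> 0"
    and "x < s + t" "y < s + t" "y' < s + t" "z < s + t" "x' < s + t" "z' < s + t"
    and "block_offset s x = block_offset s x'" "block_offset s y = block_offset s y'"
      "block_offset s z = block_offset s z'"
  shows "block_offset s x < P \<and> block_offset s y < Q \<and> block_offset s z < T"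
proof -
  have "u (block_index s x) (block_index s y) \<noteq> 0" "v (block_index s y') (block_index s z) \<noteq> 0"
    "w (block_index s x') (block_index s z') \<noteq> 0"
    using assms(2) by auto
  then have "min (block_size s t (block_index s x)) (block_size s t (block_index s x')) \<le> P \<and>
      min (block_size s t (block_index s y)) (block_size s t (block_index s y')) \<le> Q \<and>
      min (block_size s t (block_index s z)) (block_size s t (block_index s z')) \<le> T"
    by (intro block_fitsD[OF assms(1) block_index_less block_index_less block_index_less
        block_index_less block_index_less block_index_less])
  then show ?thesis
    using assms(3-) block_offset_less[of _ s t] by (metis min_less_iff_conj order_less_le_trans)
qed

definition block_lift ::
  "nat \<Rightarrow> (nat \<Rightarrow> nat \<Rightarrow> 'k::{zero,times}) \<Rightarrow> nat \<Rightarrow> nat \<Rightarrow> (nat \<Rightarrow> nat \<Rightarrow> 'k) \<Rightarrow> nat \<Rightarrow> nat \<Rightarrow> 'k" where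
  "block_lift s u m n f x y =
     (if block_offset s x < m \<and> block_offset s y < n
      then u (block_index s x) (block_index s y) * f (block_offset s x) (block_offset s y) else 0)"

lemma sum_block_lift:
  assumes alg: "mm_alg P Q T r alpha beta gamma"
    and fits: "block_fits s t P Q T u v w"
    and idx: "x < s + t" "y < s + t" "y' < s + t" "z < s + t" "x' < s + t" "z' < s + t"
  shows "(\<Sum>p<r. block_lift s u P Q (alpha p) x y * block_lift s v Q T (beta p) y' z *
      block_lift s w P T (gamma p) x' z') =
    u (block_index s x) (block_index s y) * v (block_index s y') (block_index s z) *
    w (block_index s x') (block_index s z') *
    (if block_offset s x = block_offset s x' \<and> block_offset s y = block_offset s y' \<and>
        block_offset s z = block_offset s z' then 1 else 0)"
    (is "?lhs = ?c * (if ?same_offsets then 1 else 0)")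
proof -
  let ?O = "block_offset s"
  let ?in_range = "?O x < P \<and> ?O y < Q \<and> ?O y' < Q \<and> ?O z < T \<and> ?O x' < P \<and> ?O z' < T"
  have "?lhs = (if ?in_range
      then ?c * (\<Sum>p<r. alpha p (?O x) (?O y) * beta p (?O y') (?O z) * gamma p (?O x') (?O z'))
      else 0)"
    by (cases ?in_range) (auto simp: block_lift_def sum_distrib_left mult_ac intro!: sum.neutral)
  also have "\<dots> = (if ?in_range then ?c * (if ?same_offsets then 1 else 0) else 0)"
    using alg unfolding mm_alg_def by auto
  also have "\<dots> = ?c * (if ?same_offsets then 1 else 0)"
    using block_fits_offsets[OF fits _ idx] by auto
  finally show ?thesis .
qed

lemma mm_alg_block_substitution:
  assumes scheme: "mm_alg 2 2 2 n u v w"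
    and algs: "\<And>k. k < n \<Longrightarrow> mm_alg (P k) (Q k) (T k) (r k) (alpha k) (beta k) (gamma k)"
    and fits: "\<And>k. k < n \<Longrightarrow> block_fits s t (P k) (Q k) (T k) (u k) (v k) (w k)"
  shows "mm_alg (s + t) (s + t) (s + t) (\<Sum>k<n. r k)
    (stack r (\<lambda>k p. block_lift s (u k) (P k) (Q k) (alpha k p)) n)
    (stack r (\<lambda>k p. block_lift s (v k) (Q k) (T k) (beta k p)) n)
    (stack r (\<lambda>k p. block_lift s (w k) (P k) (T k) (gamma k p)) n)"
  unfolding mm_alg_def
proof (intro allI impI)
  fix x y y' z x' z'
  assume idx: "x < s + t" "y < s + t" "y' < s + t" "z < s + t" "x' < s + t" "z' < s + t"
  let ?I = "block_index s" and ?O = "block_offset s"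
  let ?same_offsets = "?O x = ?O x' \<and> ?O y = ?O y' \<and> ?O z = ?O z'"
  let ?A = "stack r (\<lambda>k p. block_lift s (u k) (P k) (Q k) (alpha k p)) n"
    and ?B = "stack r (\<lambda>k p. block_lift s (v k) (Q k) (T k) (beta k p)) n"
    and ?C = "stack r (\<lambda>k p. block_lift s (w k) (P k) (T k) (gamma k p)) n"
  have "(\<Sum>p<(\<Sum>k<n. r k). ?A p x y * ?B p y' z * ?C p x' z') =
    (\<Sum>k<n. \<Sum>p<r k. block_lift s (u k) (P k) (Q k) (alpha k p) x y *
      block_lift s (v k) (Q k) (T k) (beta k p) y' z * block_lift s (w k) (P k) (T k) (gamma k p) x' z')"
    by (rule sum_stack[where F = "\<lambda>a b c. a x y * b y' z * c x' z'"])
  also have "\<dots> = (\<Sum>k<n. u k (?I x) (?I y) * v k (?I y') (?I z) * w k (?I x') (?I z') *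
      (if ?same_offsets then 1 else 0))"
    using algs fits idx by (intro sum.cong refl sum_block_lift) auto
  also have "\<dots> = (\<Sum>k<n. u k (?I x) (?I y) * v k (?I y') (?I z) * w k (?I x') (?I z')) *
      (if ?same_offsets then 1 else 0)"
    by (simp add: sum_distrib_right)
  also have "(\<Sum>k<n. u k (?I x) (?I y) * v k (?I y') (?I z) * w k (?I x') (?I z')) =
      (if ?I x = ?I x' \<and> ?I y = ?I y' \<and> ?I z = ?I z' then 1 else 0)"
    using scheme block_index_less[of s] unfolding mm_alg_def by simp
  finally show "(\<Sum>p<(\<Sum>k<n. r k). ?A p x y * ?B p y' z * ?C p x' z') =
      (if x = x' \<and> y = y' \<and> z = z' then 1 else 0)"
    by (simp add: block_eq_iff[of x x' s] block_eq_iff[of y y' s] block_eq_iff[of z z' s])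
qed

lemma ex_mm_alg_block_substitution:
  fixes u v w :: "nat \<Rightarrow> nat \<Rightarrow> nat \<Rightarrow> 'k::field"
  assumes scheme: "mm_alg 2 2 2 n u v w"
    and fits: "\<And>k. k < n \<Longrightarrow> block_fits s t (P k) (Q k) (T k) (u k) (v k) (w k)"
  shows "\<exists>(alpha :: nat \<Rightarrow> nat \<Rightarrow> nat \<Rightarrow> 'k) beta gamma.
    mm_alg (s + t) (s + t) (s + t) (\<Sum>k<n. mm_rank TYPE('k) (P k) (Q k) (T k)) alpha beta gamma"
proof -
  obtain alpha beta gamma :: "nat \<Rightarrow> nat \<Rightarrow> nat \<Rightarrow> nat \<Rightarrow> 'k" where
    "\<And>k. mm_alg (P k) (Q k) (T k) (mm_rank TYPE('k) (P k) (Q k) (T k)) (alpha k) (beta k) (gamma k)"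
  proof -
    have "\<forall>k. \<exists>(a :: nat \<Rightarrow> nat \<Rightarrow> nat \<Rightarrow> 'k) b c.
        mm_alg (P k) (Q k) (T k) (mm_rank TYPE('k) (P k) (Q k) (T k)) a b c"
      using ex_mm_alg_mm_rank by blast
    then show ?thesis
      unfolding choice_iff by (auto intro: that)
  qed
  then show ?thesis
    using mm_alg_block_substitution[OF scheme, where r = "\<lambda>k. mm_rank TYPE('k) (P k) (Q k) (T k)"
        and alpha = alpha and beta = beta and gamma = gamma] fits
    by blast
qed

definition mat2 :: "'k \<Rightarrow> 'k \<Rightarrow> 'k \<Rightarrow> 'k \<Rightarrow> nat \<Rightarrow> nat \<Rightarrow> 'k" where
  "mat2 a b c d i j = (if i = 0 then if j = 0 then a else b else if j = 0 then c else d)"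

(* Strassen's products M1, -M3, M7, -M2, -M5, M4, -M6. *)
definition strassen_alpha :: "nat \<Rightarrow> nat \<Rightarrow> nat \<Rightarrow> 'k::field" where
  "strassen_alpha k = [mat2 1 0 0 1, mat2 1 0 0 0, mat2 0 (-1) 0 1, mat2 0 0 (-1) (-1),
     mat2 1 1 0 0, mat2 0 0 0 (-1), mat2 1 0 (-1) 0] ! k"

definition strassen_beta :: "nat \<Rightarrow> nat \<Rightarrow> nat \<Rightarrow> 'k::field" where
  "strassen_beta k = [mat2 1 0 0 1, mat2 0 (-1) 0 1, mat2 0 0 (-1) (-1), mat2 1 0 0 0,
     mat2 0 0 0 (-1), mat2 1 0 (-1) 0, mat2 1 1 0 0] ! k"

definition strassen_gamma :: "nat \<Rightarrow> nat \<Rightarrow> nat \<Rightarrow> 'k::field" where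
  "strassen_gamma k = [mat2 1 0 0 1, mat2 0 (-1) 0 (-1), mat2 1 0 0 0, mat2 0 0 (-1) 1,
     mat2 1 (-1) 0 0, mat2 1 0 1 0, mat2 0 0 0 (-1)] ! k"

lemma mm_alg_strassen: "mm_alg 2 2 2 7 strassen_alpha strassen_beta strassen_gamma"
  unfolding mm_alg_def less_2_cases_iff
  by (simp add: eval_nat_numeral strassen_alpha_def strassen_beta_def strassen_gamma_def mat2_def)

theorem lemma2:
  "(\<exists>(alpha :: nat \<Rightarrow> nat \<Rightarrow> nat \<Rightarrow> 'k::field) beta gamma.
      mm_alg 9 9 9
        (mm_rank TYPE('k) 6 6 6 + 3 * mm_rank TYPE('k) 6 6 3 + 3 * mm_rank TYPE('k) 6 3 3)
        alpha beta gamma)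
   \<and> mm_rank TYPE('k) 9 9 9
       \<le> mm_rank TYPE('k) 6 6 6 + 3 * mm_rank TYPE('k) 6 6 3 + 3 * mm_rank TYPE('k) 6 3 3"
proof -
  \<comment> \<open>The format to which the k-th Strassen product shrinks under the split 6 + 3.\<close>
  define P :: "nat \<Rightarrow> nat" where "P = (!) [6, 6, 6, 3, 6, 3, 3]"
  define Q :: "nat \<Rightarrow> nat" where "Q = (!) [6, 6, 3, 6, 3, 3, 6]"
  define T :: "nat \<Rightarrow> nat" where "T = (!) [6, 3, 6, 6, 3, 6, 3]"
  have fits: "block_fits 6 3 (P k) (Q k) (T k)
      (strassen_alpha k) (strassen_beta k) (strassen_gamma k :: nat \<Rightarrow> nat \<Rightarrow> 'k)" if "k < 7" for k
  proof -
    have "k \<in> {0, 1, 2, 3, 4, 5, 6}"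
      using that by auto
    then show ?thesis
      unfolding block_fits_def numeral_2_eq_2 All_less_Suc
      by (elim insertE emptyE; simp add: P_def Q_def T_def block_size_def mat2_def
          strassen_alpha_def strassen_beta_def strassen_gamma_def)
  qed
  obtain alpha beta gamma :: "nat \<Rightarrow> nat \<Rightarrow> nat \<Rightarrow> 'k" where
    alg: "mm_alg (6 + 3) (6 + 3) (6 + 3) (\<Sum>k<7. mm_rank TYPE('k) (P k) (Q k) (T k)) alpha beta gamma"
    using ex_mm_alg_block_substitution[OF mm_alg_strassen fits] by blast
  have "(\<Sum>k<7. mm_rank TYPE('k) (P k) (Q k) (T k)) =
      mm_rank TYPE('k) 6 6 6 + 3 * mm_rank TYPE('k) 6 6 3 + 3 * mm_rank TYPE('k) 6 3 3"
    by (simp add: lessThan_nat_numeral P_def Q_def T_def mm_rank_rotate[of 6 6 3] mm_rank_rotate[of 6 3 6]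
        mm_rank_rotate[of 6 3 3] mm_rank_rotate[of 3 3 6])
  then show ?thesis
    using alg mm_rank_le[OF alg] by auto
qed

end
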